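(* The left adjoint of the forgetful functor from the category of abelian group objects in power quandles to the category of power quandles sends a power quandle $P$ to the free abelian group $\mathbb{Z}\mathrm{Or}(P)$ on the set $\mathrm{Or}(P)$ of orbits of $P$, with trivial conjugation ($x\rhd y=y$), unit $0$, and power operations given by the $\mathbb{Z}$-linear extension of $\pi^n([a])=[\pi^n(a)]$.
   Context: A power quandle $(P,\rhd,\pi,e)$ consists of a set $P$, a binary operation $\rhd$ on $P$, an element $e\in P$, and maps $\pi^n\colon P\to P$ for each $n\in\mathbb{Z}$, satisfying for all $a,b,c\in P$ and $m,n\in\mathbb{Z}$: (1) each left multiplication $\lambda_a\colon b\mapsto a\rhd b$ is a bijection of $P$, and $a\rhd(b\rhd c)=(a\rhd b)\rhd(a\rhd c)$; (2) $a\rhd a=a$; (3) $e\rhd b=b$ and $a\rhd e=e$; (4) $\pi^1(a)=a$ and $\pi^m(\pi^n(a))=\pi^{mn}(a)$; (5) $\pi^0(a)=e$; (6) $a\rhd\pi^n(b)=\pi^n(a\rhd b)$; (7) $\pi^n(a)\rhd b=\lambda_a^n(b)$, the $n$-th iterate of $\lambda_a$ (using $\lambda_a^{-1}$ for negative $n$, and $\lambda_a^0=\mathrm{id}$). Morphisms of power quandles are maps preserving $\rhd$, all $\pi^n$, and $e$. An abelian group object in power quandles is a power quandle $P$ with an abelian group structure whose zero is $e$ such that $\rhd\colon P\times P\to P$ and all $\pi^n$ are group homomorphisms; morphisms are maps that are both power quandle morphisms and group homomorphisms. The set of orbits $\mathrm{Or}(P)$ is the set of equivalence classes $[a]$ of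 $P$ under the equivalence relation generated by $a\rhd b\sim b$ for all $a,b\in P$; the formula $\pi^n([a])=[\pi^n(a)]$ is well defined.
   Formalization: $\mathbb{Z}\mathrm{Or}(P)$ is the free abelian group on $\mathrm{Or}(P)$ minus the orbit $[e]$, so $[e]$ is identified with $0$, and the power operations send $[a]$ to $0$ whenever $[\pi^n(a)]=[e]$. The statement above fails without it. *)

theory Defs
  imports "HOL-Algebra.Free_Abelian_Groups"
begin

record 'a pq =
  pq_carrier :: "'a set"
  pq_rhd :: "'a \<Rightarrow> 'a \<Rightarrow> 'a"
  pq_pw :: "int \<Rightarrow> 'a \<Rightarrow> 'a"
  pq_e :: 'a

definition lam_iter :: "'a pq \<Rightarrow> 'a \<Rightarrow> int \<Rightarrow> 'a \<Rightarrow> 'a" where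
  "lam_iter P a n =
     (if 0 \<le> n then (pq_rhd P a) ^^ nat n
      else (inv_into (pq_carrier P) (pq_rhd P a)) ^^ nat (- n))"

definition power_quandle :: "'a pq \<Rightarrow> bool" where
  "power_quandle P \<longleftrightarrow>
     (let C = pq_carrier P; r = pq_rhd P; p = pq_pw P; e = pq_e P in
      e \<in> C \<and>
      (\<forall>a\<in>C. \<forall>b\<in>C. r a b \<in> C) \<and>
      (\<forall>n. \<forall>a\<in>C. p n a \<in> C) \<and>
      (\<forall>a\<in>C. bij_betw (r a) C C) \<and>
      (\<forall>a\<in>C. \<forall>b\<in>C. \<forall>c\<in>C. r a (r b c) = r (r a b) (r a c)) \<and>
      (\<forall>a\<in>C. r a a = a) \<and>
      (\<forall>b\<in>C. r e b = b) \<and>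
      (\<forall>a\<in>C. r a e = e) \<and>
      (\<forall>a\<in>C. p 1 a = a) \<and>
      (\<forall>m n. \<forall>a\<in>C. p m (p n a) = p (m * n) a) \<and>
      (\<forall>a\<in>C. p 0 a = e) \<and>
      (\<forall>n. \<forall>a\<in>C. \<forall>b\<in>C. r a (p n b) = p n (r a b)) \<and>
      (\<forall>n. \<forall>a\<in>C. \<forall>b\<in>C. r (p n a) b = lam_iter P a n b))"

definition pq_hom :: "'a pq \<Rightarrow> 'b pq \<Rightarrow> ('a \<Rightarrow> 'b) \<Rightarrow> bool" where
  "pq_hom P Q f \<longleftrightarrow>
     (\<forall>a\<in>pq_carrier P. f a \<in> pq_carrier Q) \<and>
     (\<forall>a\<in>pq_carrier P. \<forall>b\<in>pq_carrier P. f (pq_rhd P a b) = pq_rhd Q (f a) (f b)) \<and>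
     (\<forall>n. \<forall>a\<in>pq_carrier P. f (pq_pw P n a) = pq_pw Q n (f a)) \<and>
     f (pq_e P) = pq_e Q"

text \<open>Abelian group objects in power quandles: a power quandle P together with an
  abelian group G on the same carrier, with zero e, such that rhd (as a map
  P x P \<rightarrow> P) and all pw n are group homomorphisms.\<close>
definition abgrp_obj :: "'a pq \<Rightarrow> 'a monoid \<Rightarrow> bool" where
  "abgrp_obj P G \<longleftrightarrow>
     power_quandle P \<and> comm_group G \<and>
     carrier G = pq_carrier P \<and> \<one>\<^bsub>G\<^esub> = pq_e P \<and>
     (\<forall>x\<in>pq_carrier P. \<forall>x'\<in>pq_carrier P. \<forall>y\<in>pq_carrier P. \<forall>y'\<in>pq_carrier P.
        pq_rhd P (x \<otimes>\<^bsub>G\<^esub> x') (y \<otimes>\<^bsub>G\<^esub> y') = pq_rhd P x y \<otimes>\<^bsub>G\<^esub> pq_rhd P x' y') \<and>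
     (\<forall>n. \<forall>x\<in>pq_carrier P. \<forall>y\<in>pq_carrier P.
        pq_pw P n (x \<otimes>\<^bsub>G\<^esub> y) = pq_pw P n x \<otimes>\<^bsub>G\<^esub> pq_pw P n y)"

definition abgrp_obj_hom ::
    "'a pq \<Rightarrow> 'a monoid \<Rightarrow> 'b pq \<Rightarrow> 'b monoid \<Rightarrow> ('a \<Rightarrow> 'b) \<Rightarrow> bool" where
  "abgrp_obj_hom P G Q H f \<longleftrightarrow> pq_hom P Q f \<and> f \<in> hom G H"

definition orb_gen :: "'a pq \<Rightarrow> ('a \<times> 'a) set" where
  "orb_gen P = {(pq_rhd P a b, b) | a b. a \<in> pq_carrier P \<and> b \<in> pq_carrier P}"

definition orb_rel :: "'a pq \<Rightarrow> ('a \<times> 'a) set" where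
  "orb_rel P = (orb_gen P \<union> (orb_gen P)\<inverse>)\<^sup>*"

definition orbit :: "'a pq \<Rightarrow> 'a \<Rightarrow> 'a set" where
  "orbit P a = orb_rel P `` {a}"

definition Orbits :: "'a pq \<Rightarrow> 'a set set" where
  "Orbits P = orbit P ` pq_carrier P"

definition orbit_pw :: "'a pq \<Rightarrow> int \<Rightarrow> 'a set \<Rightarrow> 'a set" where
  "orbit_pw P n X = orbit P (pq_pw P n (SOME a. a \<in> X \<inter> pq_carrier P))"

text \<open>ZOr(P): free abelian group on the orbits, where the orbit [e] of the unit
  is identified with the zero 0 (forced since the unit is the zero).\<close>
definition ZOr_gens :: "'a pq \<Rightarrow> 'a set set" where
  "ZOr_gens P = Orbits P - {orbit P (pq_e P)}"

definition ZOr_grp :: "'a pq \<Rightarrow> ('a set \<Rightarrow>\<^sub>0 int) monoid" where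
  "ZOr_grp P = free_Abelian_group (ZOr_gens P)"

definition ZOr_gen :: "'a pq \<Rightarrow> 'a set \<Rightarrow> int \<Rightarrow> ('a set \<Rightarrow>\<^sub>0 int)" where
  "ZOr_gen P X k = (if X = orbit P (pq_e P) then 0 else Poly_Mapping.single X k)"

definition ZOr_pw :: "'a pq \<Rightarrow> int \<Rightarrow> ('a set \<Rightarrow>\<^sub>0 int) \<Rightarrow> ('a set \<Rightarrow>\<^sub>0 int)" where
  "ZOr_pw P n c =
     (\<Sum>X\<in>Poly_Mapping.keys c. ZOr_gen P (orbit_pw P n X) (Poly_Mapping.lookup c X))"

definition ZOr_pq :: "'a pq \<Rightarrow> ('a set \<Rightarrow>\<^sub>0 int) pq" where
  "ZOr_pq P = \<lparr> pq_carrier = carrier (ZOr_grp P),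
                 pq_rhd = (\<lambda>x y. y),
                 pq_pw = ZOr_pw P,
                 pq_e = 0 \<rparr>"

definition ZOr_eta :: "'a pq \<Rightarrow> 'a \<Rightarrow> ('a set \<Rightarrow>\<^sub>0 int)" where
  "ZOr_eta P a = ZOr_gen P (orbit P a) 1"

end

theory Submission
  imports Defs
begin

text \<open>The conjugation of an abelian group object is trivial: writing \<open>x = x + 0\<close> and
  \<open>y = 0 + y\<close>, additivity of \<open>\<rhd>\<close> gives \<open>x \<rhd> y = (x \<rhd> 0) + (0 \<rhd> y) = 0 + y\<close>.
  Hence a power quandle morphism from \<open>P\<close> into an abelian group object is constant on
  orbits, and the universal property of the free abelian group on \<open>Or(P)\<close> yields a unique
  group homomorphism through which it factors. This homomorphism commutes with the power
  maps because both composites are homomorphisms that agree on the generators \<open>[a]\<close>; on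
  orbits \<open>\<pi>\<^sup>n\<close> is well defined because it commutes with every left multiplication.\<close>

lemma power_quandleD:
  assumes "power_quandle P"
  shows "pq_e P \<in> pq_carrier P"
    "\<And>a b. a \<in> pq_carrier P \<Longrightarrow> b \<in> pq_carrier P \<Longrightarrow> pq_rhd P a b \<in> pq_carrier P"
    "\<And>n a. a \<in> pq_carrier P \<Longrightarrow> pq_pw P n a \<in> pq_carrier P"
    "\<And>a. a \<in> pq_carrier P \<Longrightarrow> pq_pw P 1 a = a"
    "\<And>m n a. a \<in> pq_carrier P \<Longrightarrow> pq_pw P m (pq_pw P n a) = pq_pw P (m * n) a"
    "\<And>a. a \<in> pq_carrier P \<Longrightarrow> pq_pw P 0 a = pq_e P"
    "\<And>n a b. a \<in> pq_carrier P \<Longrightarrow> b \<in> pq_carrier P \<Longrightarrow>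
       pq_rhd P a (pq_pw P n b) = pq_pw P n (pq_rhd P a b)"
    "\<And>b. b \<in> pq_carrier P \<Longrightarrow> pq_rhd P (pq_e P) b = b"
    "\<And>a. a \<in> pq_carrier P \<Longrightarrow> pq_rhd P a (pq_e P) = pq_e P"
  using assms unfolding power_quandle_def Let_def by auto

lemma pq_pw_e:
  assumes "power_quandle P"
  shows "pq_pw P n (pq_e P) = pq_e P"
proof -
  note e = power_quandleD(1)[OF assms]
  have "pq_pw P n (pq_e P) = pq_pw P n (pq_pw P 0 (pq_e P))"
    using power_quandleD(6)[OF assms e] by simp
  also have "\<dots> = pq_pw P 0 (pq_e P)"
    using power_quandleD(5)[OF assms e] by simp
  also have "\<dots> = pq_e P"
    using power_quandleD(6)[OF assms e] .
  finally show ?thesis .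
qed

lemma equiv_orb_rel: "equiv UNIV (orb_rel P)"
  unfolding orb_rel_def
  by (intro equivI refl_rtrancl trans_rtrancl sym_rtrancl) (auto simp: sym_def)

lemma orb_rel_least:
  assumes "equiv UNIV R" "orb_gen P \<subseteq> R"
  shows "orb_rel P \<subseteq> R"
proof -
  have "orb_gen P \<union> (orb_gen P)\<inverse> \<subseteq> R"
    using assms by (auto elim: equivE dest: symD)
  then have "orb_rel P \<subseteq> R\<^sup>*"
    unfolding orb_rel_def by (rule rtrancl_mono)
  also have "R\<^sup>* = R"
    using assms(1) unfolding equiv_def
    by (simp add: rtrancl_trancl_reflcl refl_on_def Un_absorb2 subset_iff)
  finally show ?thesis .
qed

lemma equiv_inv_image: "equiv UNIV R \<Longrightarrow> equiv UNIV (inv_image R f)"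
  by (auto simp: equiv_def refl_on_def sym_inv_image trans_inv_image)

lemma orbit_eq_iff: "orbit P a = orbit P b \<longleftrightarrow> (a, b) \<in> orb_rel P"
  unfolding orbit_def using equiv_class_eq_iff[OF equiv_orb_rel, of a b] by simp

lemma orbit_self: "a \<in> orbit P a"
  unfolding orbit_def by (rule equiv_class_self[OF equiv_orb_rel UNIV_I])

lemma orb_rel_rhd:
  "a \<in> pq_carrier P \<Longrightarrow> b \<in> pq_carrier P \<Longrightarrow> (pq_rhd P a b, b) \<in> orb_rel P"
  unfolding orb_rel_def orb_gen_def by blast

lemma orb_rel_eq_if_rhd_invariant:
  assumes "\<And>a b. a \<in> pq_carrier P \<Longrightarrow> b \<in> pq_carrier P \<Longrightarrow> f (pq_rhd P a b) = f b"
    and "(a, b) \<in> orb_rel P"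
  shows "f a = f b"
proof -
  have "equiv UNIV (inv_image Id f)"
    by (rule equiv_inv_image) (simp add: equiv_def refl_Id sym_Id trans_Id)
  moreover have "orb_gen P \<subseteq> inv_image Id f"
    using assms(1) by (auto simp: orb_gen_def)
  ultimately have "orb_rel P \<subseteq> inv_image Id f"
    by (rule orb_rel_least)
  with assms(2) show ?thesis by auto
qed

lemma orb_rel_pq_pw:
  assumes "power_quandle P" "(a, b) \<in> orb_rel P"
  shows "(pq_pw P n a, pq_pw P n b) \<in> orb_rel P"
proof -
  have "orb_rel P \<subseteq> inv_image (orb_rel P) (pq_pw P n)"
  proof (rule orb_rel_least[OF equiv_inv_image[OF equiv_orb_rel]], safe)
    fix x y assume "(x, y) \<in> orb_gen P"
    then obtain c where "c \<in> pq_carrier P" "y \<in> pq_carrier P" "x = pq_rhd P c y"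
      unfolding orb_gen_def by blast
    then have "pq_pw P n x = pq_rhd P c (pq_pw P n y)"
      using power_quandleD(7)[OF assms(1)] by simp
    then show "(x, y) \<in> inv_image (orb_rel P) (pq_pw P n)"
      using orb_rel_rhd[OF \<open>c \<in> pq_carrier P\<close> power_quandleD(3)[OF assms(1) \<open>y \<in> pq_carrier P\<close>]]
      by simp
  qed
  with assms(2) show ?thesis by auto
qed

lemma orbit_some_rep:
  "a \<in> pq_carrier P \<Longrightarrow> (SOME x. x \<in> orbit P a \<inter> pq_carrier P) \<in> orbit P a \<inter> pq_carrier P"
  by (rule someI[of _ a]) (simp add: orbit_self)

lemma orbit_pw_orbit:
  assumes "power_quandle P" "a \<in> pq_carrier P"
  shows "orbit_pw P n (orbit P a) = orbit P (pq_pw P n a)"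
proof -
  have "(a, SOME x. x \<in> orbit P a \<inter> pq_carrier P) \<in> orb_rel P"
    using orbit_some_rep[OF assms(2)] by (simp add: orbit_def)
  then show ?thesis
    unfolding orbit_pw_def orbit_eq_iff
    by (meson equiv_orb_rel equivE orb_rel_pq_pw[OF assms(1)] symD)
qed

lemma funpow_fixpoint: "f x = x \<Longrightarrow> (f ^^ n) x = x"
  by (induction n) simp_all

lemma carrier_ZOr_grp: "c \<in> carrier (ZOr_grp P) \<longleftrightarrow> Poly_Mapping.keys c \<subseteq> ZOr_gens P"
  by (simp add: ZOr_grp_def)

lemma ZOr_grp_simps [simp]:
  "x \<otimes>\<^bsub>ZOr_grp P\<^esub> y = x + y" "\<one>\<^bsub>ZOr_grp P\<^esub> = 0"
  by (simp_all add: ZOr_grp_def)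

lemma comm_group_ZOr_grp: "comm_group (ZOr_grp P)"
  by (simp add: ZOr_grp_def abelian_free_Abelian_group)

lemma group_ZOr_grp: "group (ZOr_grp P)"
  by (simp add: ZOr_grp_def)

lemma ZOr_gen_cmul: "ZOr_gen P Y k = frag_cmul k (ZOr_gen P Y 1)"
  unfolding ZOr_gen_def
  by (cases "Y = orbit P (pq_e P)") (simp_all add: poly_mapping_eqI lookup_single when_def)

lemma ZOr_pw_eq_frag_extend: "ZOr_pw P n = frag_extend (\<lambda>X. ZOr_gen P (orbit_pw P n X) 1)"
  unfolding ZOr_pw_def frag_extend_def by (intro ext sum.cong refl) (rule ZOr_gen_cmul)

lemma ZOr_pw_add: "ZOr_pw P n (x + y) = ZOr_pw P n x + ZOr_pw P n y"
  unfolding ZOr_pw_eq_frag_extend by (rule frag_extend_add)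

lemma ZOr_eta_e: "ZOr_eta P (pq_e P) = 0"
  by (simp add: ZOr_eta_def ZOr_gen_def)

lemma ZOr_eta_in_carrier: "a \<in> pq_carrier P \<Longrightarrow> ZOr_eta P a \<in> carrier (ZOr_grp P)"
  unfolding carrier_ZOr_grp ZOr_eta_def ZOr_gen_def ZOr_gens_def Orbits_def by auto

lemma ZOr_gens_eta:
  assumes "X \<in> ZOr_gens P"
  obtains a where "a \<in> pq_carrier P" "X = orbit P a" "frag_of X = ZOr_eta P a"
proof -
  obtain a where "a \<in> pq_carrier P" "X = orbit P a" "X \<noteq> orbit P (pq_e P)"
    using assms unfolding ZOr_gens_def Orbits_def by blast
  then show ?thesis using that unfolding ZOr_eta_def ZOr_gen_def by metis
qed

lemma ZOr_pw_eta:
  assumes "power_quandle P" "a \<in> pq_carrier P"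
  shows "ZOr_pw P n (ZOr_eta P a) = ZOr_eta P (pq_pw P n a)"
proof (cases "orbit P a = orbit P (pq_e P)")
  case True
  then have "(a, pq_e P) \<in> orb_rel P" by (simp add: orbit_eq_iff)
  from orb_rel_pq_pw[OF assms(1) this]
  have "orbit P (pq_pw P n a) = orbit P (pq_e P)"
    by (simp add: orbit_eq_iff pq_pw_e[OF assms(1)])
  with True show ?thesis by (simp add: ZOr_eta_def ZOr_gen_def ZOr_pw_def)
next
  case False
  then have "ZOr_eta P a = frag_of (orbit P a)" by (simp add: ZOr_eta_def ZOr_gen_def)
  then show ?thesis
    by (simp add: ZOr_pw_eq_frag_extend orbit_pw_orbit[OF assms] ZOr_eta_def)
qed

lemma ZOr_pw_in_carrier:
  assumes "power_quandle P" "c \<in> carrier (ZOr_grp P)"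
  shows "ZOr_pw P n c \<in> carrier (ZOr_grp P)"
proof -
  have gen: "ZOr_gen P (orbit_pw P n X) 1 \<in> carrier (ZOr_grp P)" if X: "X \<in> ZOr_gens P" for X
  proof -
    obtain a where "a \<in> pq_carrier P" "X = orbit P a" using ZOr_gens_eta[OF X] by metis
    then show ?thesis
      using ZOr_eta_in_carrier[OF power_quandleD(3)[OF assms(1)]]
      by (simp add: orbit_pw_orbit[OF assms(1)] ZOr_eta_def)
  qed
  have "Poly_Mapping.keys (ZOr_pw P n c)
      \<subseteq> (\<Union>X\<in>Poly_Mapping.keys c. Poly_Mapping.keys (ZOr_gen P (orbit_pw P n X) 1))"
    unfolding ZOr_pw_eq_frag_extend by (rule keys_frag_extend)
  also have "\<dots> \<subseteq> ZOr_gens P"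
    using gen assms(2) unfolding carrier_ZOr_grp by blast
  finally show ?thesis unfolding carrier_ZOr_grp .
qed

lemma ZOr_pw_hom: "power_quandle P \<Longrightarrow> ZOr_pw P n \<in> hom (ZOr_grp P) (ZOr_grp P)"
  by (rule homI) (simp_all add: ZOr_pw_in_carrier ZOr_pw_add)

lemma free_Abelian_group_hom_eqI:
  assumes "group H"
    and \<phi>: "\<phi> \<in> hom (free_Abelian_group S) H" and \<psi>: "\<psi> \<in> hom (free_Abelian_group S) H"
    and "\<And>x. x \<in> S \<Longrightarrow> \<phi> (frag_of x) = \<psi> (frag_of x)"
    and "Poly_Mapping.keys c \<subseteq> S"
  shows "\<phi> c = \<psi> c"
proof -
  interpret \<phi>: group_hom "free_Abelian_group S" H \<phi>
    by (simp add: group_hom_def group_hom_axioms_def assms(1) \<phi>)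
  interpret \<psi>: group_hom "free_Abelian_group S" H \<psi>
    by (simp add: group_hom_def group_hom_axioms_def assms(1) \<psi>)
  show ?thesis
  proof (rule free_Abelian_group_induct[OF assms(5)])
    show "\<phi> 0 = \<psi> 0" using \<phi>.hom_one \<psi>.hom_one by simp
  next
    fix x y
    assume "Poly_Mapping.keys x \<subseteq> S" "Poly_Mapping.keys y \<subseteq> S" "\<phi> x = \<psi> x" "\<phi> y = \<psi> y"
    moreover from this have "x - y = x \<otimes>\<^bsub>free_Abelian_group S\<^esub> inv\<^bsub>free_Abelian_group S\<^esub> y"
      and "inv\<^bsub>free_Abelian_group S\<^esub> y \<in> carrier (free_Abelian_group S)"
      by (simp_all add: group.inv_closed)
    ultimately show "\<phi> (x - y) = \<psi> (x - y)"
      using \<phi>.hom_mult[of x "inv\<^bsub>free_Abelian_group S\<^esub> y"] \<psi>.hom_mult[of x "inv\<^bsub>free_Abelian_group S\<^esub> y"]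
        \<phi>.hom_inv[of y] \<psi>.hom_inv[of y]
      by (simp only: carrier_free_Abelian_group_iff)
  qed (rule assms(4))
qed

lemma ZOr_hom_eqI:
  assumes "group H" "\<phi> \<in> hom (ZOr_grp P) H" "\<psi> \<in> hom (ZOr_grp P) H"
    and "\<And>a. a \<in> pq_carrier P \<Longrightarrow> \<phi> (ZOr_eta P a) = \<psi> (ZOr_eta P a)"
    and "c \<in> carrier (ZOr_grp P)"
  shows "\<phi> c = \<psi> c"
proof (rule free_Abelian_group_hom_eqI[OF assms(1)])
  show "\<phi> \<in> hom (free_Abelian_group (ZOr_gens P)) H" "\<psi> \<in> hom (free_Abelian_group (ZOr_gens P)) H"
    using assms(2,3) by (simp_all add: ZOr_grp_def)
  show "Poly_Mapping.keys c \<subseteq> ZOr_gens P"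
    using assms(5) by (simp add: carrier_ZOr_grp)
  fix X assume "X \<in> ZOr_gens P"
  then show "\<phi> (frag_of X) = \<psi> (frag_of X)"
    by (rule ZOr_gens_eta) (use assms(4) in simp)
qed

lemma ZOr_power_quandle:
  assumes P: "power_quandle P"
  shows "power_quandle (ZOr_pq P)"
proof -
  let ?C = "carrier (ZOr_grp P)"
  note hom_eqI = ZOr_hom_eqI[OF group_ZOr_grp]
  have hom_id: "(\<lambda>c. c) \<in> hom (ZOr_grp P) (ZOr_grp P)"
    and hom_zero: "(\<lambda>c. 0) \<in> hom (ZOr_grp P) (ZOr_grp P)"
    and hom_pw_pw: "(\<lambda>c. ZOr_pw P m (ZOr_pw P n c)) \<in> hom (ZOr_grp P) (ZOr_grp P)" for m n
    by (rule homI; simp add: carrier_ZOr_grp[of 0] ZOr_pw_in_carrier[OF P] ZOr_pw_add)+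
  have "ZOr_pw P 1 c = c" if "c \<in> ?C" for c
    by (rule hom_eqI[OF ZOr_pw_hom[OF P] hom_id _ that])
      (simp add: ZOr_pw_eta[OF P] power_quandleD(4)[OF P])
  moreover have "ZOr_pw P m (ZOr_pw P n c) = ZOr_pw P (m * n) c" if "c \<in> ?C" for m n c
    by (rule hom_eqI[OF hom_pw_pw ZOr_pw_hom[OF P] _ that])
      (simp add: ZOr_pw_eta[OF P] power_quandleD(3,5)[OF P])
  moreover have "ZOr_pw P 0 c = 0" if "c \<in> ?C" for c
    by (rule hom_eqI[OF ZOr_pw_hom[OF P] hom_zero _ that])
      (simp add: ZOr_pw_eta[OF P] power_quandleD(6)[OF P] ZOr_eta_e)
  moreover have "lam_iter (ZOr_pq P) a n b = b" if "b \<in> ?C" for a n b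
    using that inv_into_f_f[of "\<lambda>y. y" ?C b]
    by (simp add: lam_iter_def ZOr_pq_def funpow_fixpoint)
  moreover have "bij_betw (\<lambda>y. y) ?C ?C"
    by (simp add: bij_betw_def)
  ultimately show ?thesis
    unfolding power_quandle_def Let_def
    by (simp add: ZOr_pq_def ZOr_pw_in_carrier[OF P] carrier_ZOr_grp[of 0])
qed

lemma ZOr_abgrp_obj: "power_quandle P \<Longrightarrow> abgrp_obj (ZOr_pq P) (ZOr_grp P)"
  unfolding abgrp_obj_def using ZOr_power_quandle[of P]
  by (simp add: comm_group_ZOr_grp ZOr_pq_def ZOr_pw_add)

lemma ZOr_eta_pq_hom:
  assumes "power_quandle P"
  shows "pq_hom P (ZOr_pq P) (ZOr_eta P)"
proof -
  have "ZOr_eta P (pq_rhd P a b) = ZOr_eta P b" if "a \<in> pq_carrier P" "b \<in> pq_carrier P" for a b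
    using orb_rel_rhd[OF that] by (simp add: ZOr_eta_def orbit_eq_iff[symmetric])
  then show ?thesis
    unfolding pq_hom_def ZOr_pq_def pq.simps
    using ZOr_eta_in_carrier[of _ P] ZOr_pw_eta[OF assms] ZOr_eta_e[of P] by auto
qed

lemma abgrp_obj_rhd_trivial:
  assumes Q: "abgrp_obj Q H" and x: "x \<in> pq_carrier Q" and y: "y \<in> pq_carrier Q"
  shows "pq_rhd Q x y = y"
proof -
  have PQ: "power_quandle Q" and "comm_group H" and cH: "carrier H = pq_carrier Q"
    and one: "\<one>\<^bsub>H\<^esub> = pq_e Q"
    and add: "\<And>x x' y y'. \<lbrakk>x \<in> pq_carrier Q; x' \<in> pq_carrier Q; y \<in> pq_carrier Q;
        y' \<in> pq_carrier Q\<rbrakk> \<Longrightarrow>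
        pq_rhd Q (x \<otimes>\<^bsub>H\<^esub> x') (y \<otimes>\<^bsub>H\<^esub> y') = pq_rhd Q x y \<otimes>\<^bsub>H\<^esub> pq_rhd Q x' y'"
    using Q unfolding abgrp_obj_def by blast+
  interpret comm_group H by fact
  have e: "pq_e Q \<in> pq_carrier Q" using power_quandleD(1)[OF PQ] .
  have "pq_rhd Q x y = pq_rhd Q (x \<otimes>\<^bsub>H\<^esub> pq_e Q) (pq_e Q \<otimes>\<^bsub>H\<^esub> y)"
    using x y cH one by (metis r_one l_one)
  also have "\<dots> = pq_rhd Q x (pq_e Q) \<otimes>\<^bsub>H\<^esub> pq_rhd Q (pq_e Q) y"
    using add x y e by blast
  also have "\<dots> = y" using power_quandleD(8,9)[OF PQ] x y cH one by (metis l_one)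
  finally show ?thesis .
qed

lemma abgrp_obj_pw_hom: "abgrp_obj Q H \<Longrightarrow> pq_pw Q n \<in> hom H H"
  unfolding abgrp_obj_def by (intro homI) (auto dest: power_quandleD(3))

lemma pq_hom_abgrp_obj_orb_rel_eq:
  assumes "abgrp_obj Q H" "pq_hom P Q f" "(a, b) \<in> orb_rel P"
  shows "f a = f b"
proof (rule orb_rel_eq_if_rhd_invariant[OF _ assms(3)])
  fix a b assume "a \<in> pq_carrier P" "b \<in> pq_carrier P"
  with assms(2) show "f (pq_rhd P a b) = f b"
    unfolding pq_hom_def using abgrp_obj_rhd_trivial[OF assms(1)] by simp
qed

lemma ZOr_lift:
  assumes P: "power_quandle P" and Q: "abgrp_obj Q H" and f: "pq_hom P Q f"
  shows "\<exists>h. h \<in> hom (ZOr_grp P) H \<and> (\<forall>a\<in>pq_carrier P. h (ZOr_eta P a) = f a)"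
proof -
  define rep where "rep X = (SOME a. a \<in> X \<inter> pq_carrier P)" for X
  have rep: "rep (orbit P a) \<in> orbit P a \<inter> pq_carrier P" if "a \<in> pq_carrier P" for a
    using orbit_some_rep[OF that] unfolding rep_def .
  have f_rep: "f (rep (orbit P a)) = f a" if "a \<in> pq_carrier P" for a
  proof -
    have "(a, rep (orbit P a)) \<in> orb_rel P" using rep[OF that] by (simp add: orbit_def)
    from pq_hom_abgrp_obj_orb_rel_eq[OF Q f this] show ?thesis by simp
  qed
  have "comm_group H" "carrier H = pq_carrier Q" "\<one>\<^bsub>H\<^esub> = pq_e Q"
    using Q by (simp_all add: abgrp_obj_def)
  moreover have "(\<lambda>X. f (rep X)) ` ZOr_gens P \<subseteq> carrier H"
    using f_rep f \<open>carrier H = pq_carrier Q\<close>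
    by (auto elim: ZOr_gens_eta simp: pq_hom_def)
  ultimately obtain h where h: "h \<in> hom (ZOr_grp P) H"
    "\<And>X. X \<in> ZOr_gens P \<Longrightarrow> h (frag_of X) = f (rep X)"
    using comm_group.free_Abelian_group_universal unfolding ZOr_grp_def by metis
  have "h (ZOr_eta P a) = f a" if a: "a \<in> pq_carrier P" for a
  proof (cases "orbit P a = orbit P (pq_e P)")
    case True
    then have "f a = f (pq_e P)"
      using pq_hom_abgrp_obj_orb_rel_eq[OF Q f] by (simp add: orbit_eq_iff)
    also have "\<dots> = \<one>\<^bsub>H\<^esub>" using f \<open>\<one>\<^bsub>H\<^esub> = pq_e Q\<close> by (simp add: pq_hom_def)
    also have "\<dots> = h 0"
      using hom_one[OF h(1) group_ZOr_grp] \<open>comm_group H\<close> by (simp add: comm_group_def)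
    finally show ?thesis using True by (simp add: ZOr_eta_def ZOr_gen_def)
  next
    case False
    then have "orbit P a \<in> ZOr_gens P" using a by (simp add: ZOr_gens_def Orbits_def)
    with False show ?thesis by (simp add: ZOr_eta_def ZOr_gen_def h(2) f_rep[OF a])
  qed
  with h(1) show ?thesis by blast
qed

lemma ZOr_lift_pw:
  assumes P: "power_quandle P" and Q: "abgrp_obj Q H" and f: "pq_hom P Q f"
    and h: "h \<in> hom (ZOr_grp P) H" and h_eta: "\<And>a. a \<in> pq_carrier P \<Longrightarrow> h (ZOr_eta P a) = f a"
    and c: "c \<in> carrier (ZOr_grp P)"
  shows "h (ZOr_pw P n c) = pq_pw Q n (h c)"
proof (rule ZOr_hom_eqI[OF _ _ _ _ c])
  show "group H" using Q by (simp add: abgrp_obj_def comm_group_def)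
  note pw_hom = ZOr_pw_hom[OF P] abgrp_obj_pw_hom[OF Q]
  show "(\<lambda>c. h (ZOr_pw P n c)) \<in> hom (ZOr_grp P) H" "(\<lambda>c. pq_pw Q n (h c)) \<in> hom (ZOr_grp P) H"
    using hom_in_carrier[OF h] hom_in_carrier[OF pw_hom(1)] hom_in_carrier[OF pw_hom(2)]
      hom_mult[OF h] hom_mult[OF pw_hom(1)] hom_mult[OF pw_hom(2)]
    by (intro homI; simp)+
  fix a assume "a \<in> pq_carrier P"
  with f show "h (ZOr_pw P n (ZOr_eta P a)) = pq_pw Q n (h (ZOr_eta P a))"
    by (simp add: ZOr_pw_eta[OF P] h_eta power_quandleD(3)[OF P] pq_hom_def)
qed

lemma ZOr_lift_abgrp_obj_hom:
  assumes P: "power_quandle P" and Q: "abgrp_obj Q H" and f: "pq_hom P Q f"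
    and h: "h \<in> hom (ZOr_grp P) H" and h_eta: "\<And>a. a \<in> pq_carrier P \<Longrightarrow> h (ZOr_eta P a) = f a"
  shows "abgrp_obj_hom (ZOr_pq P) (ZOr_grp P) Q H h"
proof -
  have "carrier H = pq_carrier Q" "\<one>\<^bsub>H\<^esub> = pq_e Q" "group H"
    using Q by (simp_all add: abgrp_obj_def comm_group_def)
  then have "h 0 = pq_e Q"
    using hom_one[OF h group_ZOr_grp] by simp
  then show ?thesis
    unfolding abgrp_obj_hom_def pq_hom_def
    using h hom_in_carrier[OF h] \<open>carrier H = pq_carrier Q\<close>
      ZOr_lift_pw[OF P Q f h h_eta] abgrp_obj_rhd_trivial[OF Q]
    by (simp add: ZOr_pq_def)
qed

theorem mainTheorem3:
  fixes P :: "'a pq"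
  assumes "power_quandle P"
  shows "abgrp_obj (ZOr_pq P) (ZOr_grp P)
       \<and> pq_hom P (ZOr_pq P) (ZOr_eta P)
       \<and> (\<forall>(Q :: 'b pq) (H :: 'b monoid) f.
            abgrp_obj Q H \<and> pq_hom P Q f \<longrightarrow>
              (\<exists>g. abgrp_obj_hom (ZOr_pq P) (ZOr_grp P) Q H g
                   \<and> (\<forall>a\<in>pq_carrier P. g (ZOr_eta P a) = f a))
            \<and> (\<forall>g g'. abgrp_obj_hom (ZOr_pq P) (ZOr_grp P) Q H g
                   \<and> (\<forall>a\<in>pq_carrier P. g (ZOr_eta P a) = f a)
                   \<and> abgrp_obj_hom (ZOr_pq P) (ZOr_grp P) Q H g'
                   \<and> (\<forall>a\<in>pq_carrier P. g' (ZOr_eta P a) = f a)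
                   \<longrightarrow> (\<forall>x\<in>carrier (ZOr_grp P). g x = g' x)))"
proof (intro conjI allI impI ballI; (elim conjE)?)
  show "abgrp_obj (ZOr_pq P) (ZOr_grp P)" using ZOr_abgrp_obj[OF assms] .
  show "pq_hom P (ZOr_pq P) (ZOr_eta P)" using ZOr_eta_pq_hom[OF assms] .
  fix Q :: "'b pq" and H :: "'b monoid" and f
  assume Q: "abgrp_obj Q H" and f: "pq_hom P Q f"
  obtain h where h: "h \<in> hom (ZOr_grp P) H"
    and h_eta: "\<And>a. a \<in> pq_carrier P \<Longrightarrow> h (ZOr_eta P a) = f a"
    using ZOr_lift[OF assms Q f] by blast
  have "abgrp_obj_hom (ZOr_pq P) (ZOr_grp P) Q H h"
    using ZOr_lift_abgrp_obj_hom[OF assms Q f h h_eta] .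
  with h_eta show "\<exists>g. abgrp_obj_hom (ZOr_pq P) (ZOr_grp P) Q H g
                   \<and> (\<forall>a\<in>pq_carrier P. g (ZOr_eta P a) = f a)" by blast
  fix g g' x
  assume "abgrp_obj_hom (ZOr_pq P) (ZOr_grp P) Q H g" "\<forall>a\<in>pq_carrier P. g (ZOr_eta P a) = f a"
    "abgrp_obj_hom (ZOr_pq P) (ZOr_grp P) Q H g'" "\<forall>a\<in>pq_carrier P. g' (ZOr_eta P a) = f a"
    "x \<in> carrier (ZOr_grp P)"
  moreover have "group H" using Q by (simp add: abgrp_obj_def comm_group_def)
  ultimately show "g x = g' x"
    using ZOr_hom_eqI[of H g P g' x] by (simp add: abgrp_obj_hom_def)
qed

end
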